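(* If $f\in\mathbb{Z}[x_1,x_2,\dots]$ is atom-positive, then $\pi_if$ is atom-positive for every positive integer $i$.
   Context: Let $P=\mathbb{Z}[x_1,x_2,\dots]$; $s_i$ acts on $P$ by swapping $x_i,x_{i+1}$; $\partial_if=\frac{f-s_if}{x_i-x_{i+1}}$, $\pi_if=\partial_i(x_if)$, $\theta_if=x_{i+1}\partial_if$; for a reduced decomposition $w=s_{i_1}\cdots s_{i_l}$ of a permutation, $\theta_w=\theta_{i_1}\cdots\theta_{i_l}$ (well defined), $\theta_{\mathrm{id}}=\mathrm{id}$. For a weak composition $\gamma=(\gamma_1,\dots,\gamma_n)$, $x^\gamma=x_1^{\gamma_1}\cdots x_n^{\gamma_n}$; let $\lambda$ be $\gamma$ sorted into weakly decreasing order and $w$ the minimal-length permutation with $w\cdot\lambda=\gamma$ ($s_i$ swaps entries $i,i+1$). The Demazure atom is $\mathcal{A}_\gamma=\theta_wx^\lambda$. A polynomial is atom-positive if it is a linear combination of Demazure atoms $\mathcal{A}_\gamma$ with nonnegative integer coefficients. *)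

theory Defs
  imports "HOL-Library.Poly_Mapping" "HOL-Combinatorics.Permutations"
begin

text \<open>Polynomials in Z[x_1,x_2,...]: finitely supported maps from monomials
(finitely supported exponent vectors, variable x_k has index k) to integer coefficients.
Index 0 is never used by Demazure atoms; atom-positive polynomials lie in Z[x_1,x_2,...].\<close>

type_synonym zpoly = "(nat \<Rightarrow>\<^sub>0 nat) \<Rightarrow>\<^sub>0 int"

definition X :: "nat \<Rightarrow> zpoly" where
  "X k = Poly_Mapping.single (Poly_Mapping.single k 1) 1"

definition sidx :: "nat \<Rightarrow> nat \<Rightarrow> nat" where
  "sidx i k = (if k = i then Suc i else if k = Suc i then i else k)"

definition sact :: "nat \<Rightarrow> zpoly \<Rightarrow> zpoly" where
  "sact i (f::zpoly) = Abs_poly_mapping (\<lambda>m::nat \<Rightarrow>\<^sub>0 nat. Poly_Mapping.lookup f (Abs_poly_mapping (\<lambda>k. Poly_Mapping.lookup m (sidx i k))))"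

definition ddiff :: "nat \<Rightarrow> zpoly \<Rightarrow> zpoly" where
  "ddiff i f = (THE g. (X i - X (Suc i)) * g = f - sact i f)"

definition piop :: "nat \<Rightarrow> zpoly \<Rightarrow> zpoly" where
  "piop i f = ddiff i (X i * f)"

definition thetaop :: "nat \<Rightarrow> zpoly \<Rightarrow> zpoly" where
  "thetaop i f = X (Suc i) * ddiff i f"

definition word_perm :: "nat list \<Rightarrow> nat \<Rightarrow> nat" where
  "word_perm ws = foldr (\<lambda>i w. sidx i \<circ> w) ws id"

definition perm_length :: "(nat \<Rightarrow> nat) \<Rightarrow> nat" where
  "perm_length w = (LEAST l. \<exists>ws. length ws = l \<and> (\<forall>i\<in>set ws. 1 \<le> i) \<and> word_perm ws = w)"

definition reduced_word :: "nat list \<Rightarrow> (nat \<Rightarrow> nat) \<Rightarrow> bool" where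
  "reduced_word ws w \<longleftrightarrow> (\<forall>i\<in>set ws. 1 \<le> i) \<and> word_perm ws = w \<and> length ws = perm_length w"

definition theta_word :: "nat list \<Rightarrow> zpoly \<Rightarrow> zpoly" where
  "theta_word ws f = foldr thetaop ws f"

definition theta_perm :: "(nat \<Rightarrow> nat) \<Rightarrow> zpoly \<Rightarrow> zpoly" where
  "theta_perm w = theta_word (SOME ws. reduced_word ws w)"

text \<open>Weak compositions gamma = (gamma_1,...,gamma_n) as lists (entry j is list index j-1).
Left action of a permutation w of {1..n}: (w\<cdot>gamma)_j = gamma_{w^{-1}(j)}, so s_i swaps entries i,i+1.\<close>
definition comp_act :: "(nat \<Rightarrow> nat) \<Rightarrow> nat list \<Rightarrow> nat list" where
  "comp_act w \<gamma> = map (\<lambda>j. \<gamma> ! (inv w (Suc j) - 1)) [0..<length \<gamma>]"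

definition xmon :: "nat list \<Rightarrow> zpoly" where
  "xmon \<gamma> = (\<Prod>j<length \<gamma>. X (Suc j) ^ (\<gamma> ! j))"

definition sort_dec :: "nat list \<Rightarrow> nat list" where
  "sort_dec \<gamma> = rev (sort \<gamma>)"

definition min_perm :: "nat list \<Rightarrow> nat \<Rightarrow> nat" where
  "min_perm \<gamma> = (ARG_MIN perm_length w. w permutes {1..length \<gamma>} \<and> comp_act w (sort_dec \<gamma>) = \<gamma>)"

definition atom :: "nat list \<Rightarrow> zpoly" where
  "atom \<gamma> = theta_perm (min_perm \<gamma>) (xmon (sort_dec \<gamma>))"

definition atom_positive :: "zpoly \<Rightarrow> bool" where
  "atom_positive f \<longleftrightarrow> (\<exists>S c. finite S \<and> f = (\<Sum>\<gamma>\<in>S. of_nat (c \<gamma>) * atom \<gamma>))"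

end

theory Submission
  imports Defs
begin

text \<open>Since \<open>\<pi>\<^sub>i = 1 + \<theta>\<^sub>i\<close> and \<open>\<pi>\<^sub>i\<close> is linear, it suffices to show that \<open>\<pi>\<^sub>i A\<^sub>\<gamma>\<close> is
  atom-positive. With \<open>w\<close> the minimal permutation sorting \<open>\<lambda>\<close> to \<open>\<gamma>\<close>: if \<open>\<gamma>\<^sub>i > \<gamma>\<^sub>i\<^sub>+\<^sub>1\<close>,
  then \<open>s\<^sub>i w\<close> is the minimal permutation for \<open>s\<^sub>i\<gamma>\<close> and is one longer than \<open>w\<close>, so
  \<open>\<theta>\<^sub>i A\<^sub>\<gamma> = A\<^sub>s\<^sub>\<^sub>i\<^sub>\<gamma>\<close>; if \<open>\<gamma>\<^sub>i = \<gamma>\<^sub>i\<^sub>+\<^sub>1\<close>, then \<open>s\<^sub>i w = w s\<^sub>a\<close> for an \<open>a\<close> with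
  \<open>\<lambda>\<^sub>a = \<lambda>\<^sub>a\<^sub>+\<^sub>1\<close>, so \<open>\<theta>\<^sub>i A\<^sub>\<gamma> = \<theta>\<^sub>w \<theta>\<^sub>a x\<^sup>\<lambda> = 0\<close>; if \<open>\<gamma>\<^sub>i < \<gamma>\<^sub>i\<^sub>+\<^sub>1\<close>, the first
  case applied to \<open>s\<^sub>i\<gamma>\<close> and \<open>\<theta>\<^sub>i\<^sup>2 = -\<theta>\<^sub>i\<close> give \<open>\<pi>\<^sub>i A\<^sub>\<gamma> = 0\<close>. Both identities
  rewrite \<open>\<theta>\<^sub>w\<close> along different reduced words, which is legitimate because the \<open>\<theta>\<^sub>i\<close>
  satisfy the braid relations (Matsumoto's theorem).\<close>

section \<open>The action of simple transpositions on polynomials\<close>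

lemma poly_mapping_sum_single:
  "f = (\<Sum>m\<in>Poly_Mapping.keys f. Poly_Mapping.single m (Poly_Mapping.lookup f m))"
proof (rule poly_mapping_eqI)
  fix k
  have "(\<Sum>m\<in>Poly_Mapping.keys f. Poly_Mapping.lookup (Poly_Mapping.single m (Poly_Mapping.lookup f m)) k)
      = (\<Sum>m\<in>Poly_Mapping.keys f. if m = k then Poly_Mapping.lookup f m else 0)"
    by (rule sum.cong) (auto simp: lookup_single when_def)
  also have "\<dots> = Poly_Mapping.lookup f k"
    by (simp add: sum.delta in_keys_iff)
  finally show "Poly_Mapping.lookup f k
      = Poly_Mapping.lookup (\<Sum>m\<in>Poly_Mapping.keys f. Poly_Mapping.single m (Poly_Mapping.lookup f m)) k"
    by (simp add: lookup_sum)
qed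

lemma poly_mapping_single_add_induct [case_names single add]:
  fixes f :: "'a \<Rightarrow>\<^sub>0 'b::comm_monoid_add"
  assumes single: "\<And>m c. P (Poly_Mapping.single m c)"
    and add: "\<And>f g. P f \<Longrightarrow> P g \<Longrightarrow> P (f + g)"
  shows "P f"
proof -
  have "P (\<Sum>m\<in>A. Poly_Mapping.single m (Poly_Mapping.lookup f m))" if "finite A" for A
    using that
  proof (induction A rule: finite_induct)
    case empty
    then show ?case
      using single[of undefined 0] by simp
  next
    case (insert m A)
    then show ?case
      by (simp add: add single)
  qed
  then show ?thesis
    by (metis finite_keys poly_mapping_sum_single)
qed

lemma sidx_sidx [simp]: "sidx i (sidx i k) = k"
  by (auto simp: sidx_def)

lemma sidx_simps [simp]:
  "sidx i i = Suc i" "sidx i (Suc i) = i" "k \<noteq> i \<Longrightarrow> k \<noteq> Suc i \<Longrightarrow> sidx i k = k"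
  by (auto simp: sidx_def)

lemma inj_sidx: "inj (sidx i)"
  by (metis injI sidx_sidx)

lemma bij_sidx: "bij (sidx i)"
  by (metis bij_betw_imageI inj_sidx sidx_sidx surj_def)

lemma inv_sidx: "inv (sidx i) = sidx i"
  by (metis inv_unique_comp o_def sidx_sidx fun_eq_iff id_apply)

lemma sidx_eq_transpose: "sidx i = Transposition.transpose i (Suc i)"
  by (auto simp: fun_eq_iff sidx_def Transposition.transpose_def)

lemma sidx_permutes: "i \<in> S \<Longrightarrow> Suc i \<in> S \<Longrightarrow> sidx i permutes S"
  using permutes_swap_id[of i S "Suc i"] sidx_eq_transpose by simp

lemma sidx_commute: "Suc a < b \<or> Suc b < a \<Longrightarrow> sidx a (sidx b k) = sidx b (sidx a k)"
  by (auto simp: sidx_def)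

lemma sidx_braid: "sidx a (sidx (Suc a) (sidx a k)) = sidx (Suc a) (sidx a (sidx (Suc a) k))"
  by (auto simp: sidx_def)

definition swap_exps :: "nat \<Rightarrow> (nat \<Rightarrow>\<^sub>0 nat) \<Rightarrow> (nat \<Rightarrow>\<^sub>0 nat)" where
  "swap_exps i m = Abs_poly_mapping (\<lambda>k. Poly_Mapping.lookup m (sidx i k))"

lemma lookup_swap_exps [simp]: "Poly_Mapping.lookup (swap_exps i m) k = Poly_Mapping.lookup m (sidx i k)"
proof -
  have "{k. Poly_Mapping.lookup m (sidx i k) \<noteq> 0} = sidx i -` Poly_Mapping.keys m"
    by (auto simp: in_keys_iff)
  then have "finite {k. Poly_Mapping.lookup m (sidx i k) \<noteq> 0}"
    using finite_vimageI[OF finite_keys inj_sidx] by simp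
  then show ?thesis
    unfolding swap_exps_def by simp
qed

lemma swap_exps_swap_exps [simp]: "swap_exps i (swap_exps i m) = m"
  by (simp add: poly_mapping_eq_iff fun_eq_iff)

lemma inj_swap_exps: "inj (swap_exps i)"
  by (metis injI swap_exps_swap_exps)

lemma swap_exps_add: "swap_exps i (m + m') = swap_exps i m + swap_exps i m'"
  by (simp add: poly_mapping_eq_iff fun_eq_iff lookup_add)

lemma swap_exps_zero [simp]: "swap_exps i 0 = 0"
  by (simp add: poly_mapping_eq_iff fun_eq_iff)

lemma lookup_sact: "Poly_Mapping.lookup (sact i f) m = Poly_Mapping.lookup f (swap_exps i m)"
proof -
  have "{m. Poly_Mapping.lookup f (swap_exps i m) \<noteq> 0} = swap_exps i -` Poly_Mapping.keys f"
    by (auto simp: in_keys_iff)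
  then have "finite {m. Poly_Mapping.lookup f (swap_exps i m) \<noteq> 0}"
    using finite_vimageI[OF finite_keys inj_swap_exps] by simp
  then show ?thesis
    unfolding sact_def swap_exps_def[symmetric] by simp
qed

lemma sact_single: "sact i (Poly_Mapping.single m c) = Poly_Mapping.single (swap_exps i m) c"
proof (rule poly_mapping_eqI)
  fix m'
  have "(m = swap_exps i m') = (swap_exps i m = m')"
    by (metis swap_exps_swap_exps)
  then show "Poly_Mapping.lookup (sact i (Poly_Mapping.single m c)) m'
      = Poly_Mapping.lookup (Poly_Mapping.single (swap_exps i m) c) m'"
    unfolding lookup_sact lookup_single by simp
qed

lemma sact_add [simp]: "sact i (f + g) = sact i f + sact i g"
  by (rule poly_mapping_eqI) (simp add: lookup_add lookup_sact)

lemma sact_zero [simp]: "sact i 0 = 0"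
  by (simp add: poly_mapping_eq_iff fun_eq_iff lookup_sact)

lemma sact_diff [simp]: "sact i (f - g) = sact i f - sact i g"
  by (simp add: poly_mapping_eq_iff fun_eq_iff lookup_sact lookup_minus)

lemma sact_sact [simp]: "sact i (sact i f) = f"
  by (simp add: poly_mapping_eq_iff fun_eq_iff lookup_sact)

lemma sact_mult [simp]: "sact i (f * g) = sact i f * sact i g"
proof (induction f rule: poly_mapping_single_add_induct)
  case (single m c)
  show ?case
  proof (induction g rule: poly_mapping_single_add_induct)
    case (single m' c')
    then show ?case
      by (simp add: mult_single sact_single swap_exps_add)
  qed (simp add: distrib_left)
qed (simp add: distrib_right)

lemma sact_one [simp]: "sact i 1 = 1"
  by (metis sact_single single_one swap_exps_zero)

lemma sact_of_nat [simp]: "sact i (of_nat c) = of_nat c"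
  by (metis sact_single single_of_nat swap_exps_zero)

lemma sact_power [simp]: "sact i (f ^ n) = sact i f ^ n"
  by (induct n) auto

lemma sact_prod: "sact i (prod F S) = (\<Prod>x\<in>S. sact i (F x))"
  by (induct S rule: infinite_finite_induct) auto

lemma sact_X [simp]: "sact i (X k) = X (sidx i k)"
proof -
  have "swap_exps i (Poly_Mapping.single k 1) = Poly_Mapping.single (sidx i k) 1"
    by (rule poly_mapping_eqI) (metis lookup_single_eq lookup_single_not_eq lookup_swap_exps sidx_sidx)
  then show ?thesis
    by (simp add: X_def sact_single)
qed

lemma sact_commute:
  assumes "Suc a < b \<or> Suc b < a"
  shows "sact a (sact b f) = sact b (sact a f)"
proof (rule poly_mapping_eqI)
  fix m
  have "swap_exps b (swap_exps a m) = swap_exps a (swap_exps b m)"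
    by (rule poly_mapping_eqI) (simp add: sidx_commute[OF assms])
  then show "Poly_Mapping.lookup (sact a (sact b f)) m = Poly_Mapping.lookup (sact b (sact a f)) m"
    by (simp add: lookup_sact)
qed

lemma sact_braid: "sact a (sact (Suc a) (sact a f)) = sact (Suc a) (sact a (sact (Suc a) f))"
proof (rule poly_mapping_eqI)
  fix m
  have "swap_exps a (swap_exps (Suc a) (swap_exps a m)) = swap_exps (Suc a) (swap_exps a (swap_exps (Suc a) m))"
    by (rule poly_mapping_eqI) (simp add: sidx_braid)
  then show "Poly_Mapping.lookup (sact a (sact (Suc a) (sact a f))) m
      = Poly_Mapping.lookup (sact (Suc a) (sact a (sact (Suc a) f))) m"
    by (simp add: lookup_sact)
qed

section \<open>Divided differences and the operators \<open>\<pi>\<^sub>i\<close>, \<open>\<theta>\<^sub>i\<close>\<close>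

definition xdiff :: "nat \<Rightarrow> zpoly" where
  "xdiff i = X i - X (Suc i)"

lemma X_inj: "X i = X j \<Longrightarrow> i = j"
  unfolding X_def by (metis inj_single injD one_neq_zero lookup_single_eq lookup_single_not_eq)

lemma xdiff_nonzero: "xdiff i \<noteq> 0"
  unfolding xdiff_def using X_inj[of i "Suc i"] by auto

lemma xdiff_mult_cancel: "xdiff i * g = xdiff i * g' \<Longrightarrow> g = g'"
  using xdiff_nonzero by simp

lemma sact_xdiff [simp]: "sact i (xdiff i) = - xdiff i"
  by (simp add: xdiff_def)

lemma X_power: "X k ^ a = Poly_Mapping.single (Poly_Mapping.single k a) 1"
proof (induct a)
  case (Suc a)
  then show ?case
    by (simp add: X_def mult_single single_add[symmetric] mult.commute)
qed simp

lemma diff_dvd_power_diff: "(u - v) dvd u ^ k - (v ^ k :: 'a::comm_ring_1)"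
  by (metis power_diff_sumr2 dvd_triv_left)

lemma diff_dvd_power_mult_swap: "(u - v) dvd u ^ a * v ^ b - v ^ a * (u ^ b :: 'a::comm_ring_1)"
proof (cases "b \<le> a")
  case True
  then obtain k where "a = b + k"
    using le_Suc_ex by blast
  then have "u ^ a * v ^ b - v ^ a * u ^ b = (u * v) ^ b * (u ^ k - v ^ k)"
    by (simp add: power_add power_mult_distrib algebra_simps)
  then show ?thesis
    by (simp add: diff_dvd_power_diff)
next
  case False
  then obtain k where "b = a + k"
    by (metis le_Suc_ex nle_le)
  then have "u ^ a * v ^ b - v ^ a * u ^ b = - ((u * v) ^ a * (u ^ k - v ^ k))"
    by (simp add: power_add power_mult_distrib algebra_simps)
  then show ?thesis
    by (simp add: diff_dvd_power_diff)
qed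

lemma xdiff_dvd_single: "xdiff i dvd Poly_Mapping.single m c - sact i (Poly_Mapping.single m c)"
proof -
  define a where "a = Poly_Mapping.lookup m i"
  define b where "b = Poly_Mapping.lookup m (Suc i)"
  define m0 where "m0 = Poly_Mapping.update i 0 (Poly_Mapping.update (Suc i) 0 m)"
  have m: "m = m0 + Poly_Mapping.single i a + Poly_Mapping.single (Suc i) b"
    by (rule poly_mapping_eqI) (auto simp: m0_def a_def b_def lookup_add lookup_update lookup_single when_def)
  have swapped: "swap_exps i m = m0 + Poly_Mapping.single i b + Poly_Mapping.single (Suc i) a"
    by (rule poly_mapping_eqI)
      (auto simp: m0_def a_def b_def lookup_add lookup_update lookup_single when_def sidx_def)
  have "Poly_Mapping.single m c = Poly_Mapping.single m0 c * (X i ^ a * X (Suc i) ^ b)"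
    by (subst m) (simp add: X_power mult_single add.assoc)
  moreover have "sact i (Poly_Mapping.single m c) = Poly_Mapping.single m0 c * (X (Suc i) ^ a * X i ^ b)"
    by (simp add: sact_single swapped X_power mult_single add_ac)
  ultimately have "Poly_Mapping.single m c - sact i (Poly_Mapping.single m c)
      = Poly_Mapping.single m0 c * (X i ^ a * X (Suc i) ^ b - X (Suc i) ^ a * X i ^ b)"
    by (simp add: right_diff_distrib)
  also have "xdiff i dvd \<dots>"
    unfolding xdiff_def by (intro dvd_mult diff_dvd_power_mult_swap)
  finally show ?thesis .
qed

lemma xdiff_dvd_sact_diff: "xdiff i dvd f - sact i f"
proof (induction f rule: poly_mapping_single_add_induct)
  case (add f g)
  have "f + g - sact i (f + g) = (f - sact i f) + (g - sact i g)"
    by simp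
  with add show ?case
    by (metis dvd_add)
qed (rule xdiff_dvd_single)

lemma xdiff_mult_ddiff: "xdiff i * ddiff i f = f - sact i f"
proof -
  have "\<exists>!g. xdiff i * g = f - sact i f"
    using xdiff_dvd_sact_diff xdiff_mult_cancel by (metis dvdE)
  then show ?thesis
    unfolding ddiff_def xdiff_def[symmetric] by (rule theI')
qed

lemma ddiff_eqI: "xdiff i * g = f - sact i f \<Longrightarrow> ddiff i f = g"
  using xdiff_mult_ddiff xdiff_mult_cancel by metis

lemma sact_ddiff [simp]: "sact i (ddiff i f) = ddiff i f"
proof -
  have "sact i (xdiff i * ddiff i f) = sact i f - f"
    by (simp add: xdiff_mult_ddiff)
  then have "xdiff i * sact i (ddiff i f) = f - sact i f"
    by (simp add: algebra_simps)
  then show ?thesis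
    using ddiff_eqI by metis
qed

lemma ddiff_add: "ddiff i (f + g) = ddiff i f + ddiff i g"
  by (rule ddiff_eqI) (simp add: distrib_left xdiff_mult_ddiff)

lemma ddiff_diff: "ddiff i (f - g) = ddiff i f - ddiff i g"
  by (rule ddiff_eqI) (simp add: right_diff_distrib xdiff_mult_ddiff)

lemma ddiff_mult_invariant: "sact i h = h \<Longrightarrow> ddiff i (h * f) = h * ddiff i f"
  by (rule ddiff_eqI) (simp add: xdiff_mult_ddiff algebra_simps)

lemma ddiff_invariant: "sact i f = f \<Longrightarrow> ddiff i f = 0"
  by (rule ddiff_eqI) simp

lemma xdiff_mult_piop: "xdiff i * piop i f = X i * f - X (Suc i) * sact i f"
  by (simp add: piop_def xdiff_mult_ddiff)

lemma piop_eqI: "xdiff i * g = X i * f - X (Suc i) * sact i f \<Longrightarrow> piop i f = g"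
  unfolding piop_def by (rule ddiff_eqI) simp

lemma piop_eq_theta: "piop i f = f + thetaop i f"
proof (rule piop_eqI)
  have "xdiff i * (f + thetaop i f) = xdiff i * f + X (Suc i) * (xdiff i * ddiff i f)"
    by (simp add: thetaop_def distrib_left mult.left_commute)
  also have "\<dots> = X i * f - X (Suc i) * sact i f"
    by (simp only: xdiff_mult_ddiff) (simp add: xdiff_def algebra_simps)
  finally show "xdiff i * (f + thetaop i f) = X i * f - X (Suc i) * sact i f" .
qed

lemma piop_invariant: "sact i f = f \<Longrightarrow> piop i f = f"
  by (rule piop_eqI) (simp add: xdiff_def algebra_simps)

lemma sact_piop [simp]: "sact i (piop i f) = piop i f"
  by (simp add: piop_def)

lemma piop_piop [simp]: "piop i (piop i f) = piop i f"
  by (simp add: piop_invariant)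

lemma piop_add: "piop i (f + g) = piop i f + piop i g"
  by (simp add: piop_def distrib_left ddiff_add)

lemma piop_diff: "piop i (f - g) = piop i f - piop i g"
  by (simp add: piop_def right_diff_distrib ddiff_diff)

lemma piop_sum: "piop i (sum F S) = (\<Sum>x\<in>S. piop i (F x))"
  by (induct S rule: infinite_finite_induct) (auto simp: piop_add piop_invariant)

lemma piop_of_nat_mult: "piop i (of_nat c * f) = of_nat c * piop i f"
  unfolding piop_def mult.left_commute[of "X i"] by (rule ddiff_mult_invariant) simp

lemma theta_invariant: "sact i f = f \<Longrightarrow> thetaop i f = 0"
  by (simp add: thetaop_def ddiff_invariant)

lemma theta_theta: "thetaop i (thetaop i f) = - thetaop i f"
proof -
  have theta: "thetaop i g = piop i g - g" for g
    by (simp add: piop_eq_theta)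
  show ?thesis
    by (simp add: theta piop_diff)
qed

lemma sact_ddiff_commute:
  assumes "Suc a < b \<or> Suc b < a"
  shows "sact a (ddiff b f) = ddiff b (sact a f)"
proof -
  have "sact a (xdiff b) = xdiff b"
    using assms by (auto simp: xdiff_def)
  then have "xdiff b * sact a (ddiff b f) = sact a f - sact b (sact a f)"
    using arg_cong[OF xdiff_mult_ddiff[of b f], of "sact a"] by (simp add: sact_commute[OF assms])
  then show ?thesis
    by (metis ddiff_eqI)
qed

lemma ddiff_commute:
  assumes ab: "Suc a < b \<or> Suc b < a"
  shows "ddiff a (ddiff b f) = ddiff b (ddiff a f)"
proof -
  have expand: "xdiff a * xdiff b * ddiff a (ddiff b f) = f - sact b f - (sact a f - sact a (sact b f))"
    if "Suc a < b \<or> Suc b < a" for a b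
  proof -
    have "xdiff a * xdiff b * ddiff a (ddiff b f) = xdiff b * (ddiff b f - sact a (ddiff b f))"
      by (simp add: xdiff_mult_ddiff ac_simps)
    also have "\<dots> = f - sact b f - (sact a f - sact a (sact b f))"
      by (simp add: sact_ddiff_commute[OF that] sact_commute[OF that] right_diff_distrib xdiff_mult_ddiff)
    finally show ?thesis .
  qed
  have "xdiff a * xdiff b * ddiff a (ddiff b f) = f - sact b f - (sact a f - sact a (sact b f))"
    by (rule expand[OF ab])
  also have "\<dots> = f - sact a f - (sact b f - sact b (sact a f))"
    by (simp add: sact_commute[OF ab])
  also have "\<dots> = xdiff a * xdiff b * ddiff b (ddiff a f)"
    using expand[of b a] ab by (metis mult.commute)
  finally show ?thesis
    using xdiff_nonzero by simp
qed

lemma theta_commute: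
  assumes "Suc a < b \<or> Suc b < a"
  shows "thetaop a (thetaop b f) = thetaop b (thetaop a f)"
proof -
  have "sact a (X (Suc b)) = X (Suc b)" "sact b (X (Suc a)) = X (Suc a)"
    using assms by (auto simp: sidx_def)
  then show ?thesis
    unfolding thetaop_def by (simp add: ddiff_mult_invariant ddiff_commute[OF assms] ac_simps)
qed

text \<open>Both sides of the braid relation for \<open>\<pi>\<close> are computed after multiplication by the
  Vandermonde product \<open>(x\<^sub>a - x\<^sub>a\<^sub>+\<^sub>1)(x\<^sub>a\<^sub>+\<^sub>1 - x\<^sub>a\<^sub>+\<^sub>2)(x\<^sub>a - x\<^sub>a\<^sub>+\<^sub>2)\<close>; the two results
  agree by the braid relation for \<open>s\<^sub>a\<close>, \<open>s\<^sub>a\<^sub>+\<^sub>1\<close>.\<close>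

lemma vandermonde_mult_piop_aba:
  "xdiff a * xdiff (Suc a) * (X a - X (Suc (Suc a))) * piop a (piop (Suc a) (piop a f))
   = X a * X (Suc a) * (X a * f - X (Suc a) * sact a f)
     - X a * X (Suc (Suc a)) * (X a * sact (Suc a) f - X (Suc (Suc a)) * sact (Suc a) (sact a f))
     + X (Suc a) * X (Suc (Suc a)) * (X (Suc a) * sact a (sact (Suc a) f)
         - X (Suc (Suc a)) * sact a (sact (Suc a) (sact a f)))"
  (is "?D1 * ?D2 * ?D13 * _ = ?rhs")
proof -
  let ?x1 = "X a" and ?x2 = "X (Suc a)" and ?x3 = "X (Suc (Suc a))"
  let ?s1 = "sact a" and ?s2 = "sact (Suc a)"
  define g where "g = piop a f"
  define h where "h = piop (Suc a) g"
  have E1: "?D1 * g = ?x1 * f - ?x2 * ?s1 f"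
    unfolding g_def by (rule xdiff_mult_piop)
  have E2: "?D2 * h = ?x2 * g - ?x3 * ?s2 g"
    unfolding h_def by (rule xdiff_mult_piop)
  have "?s1 g = g"
    unfolding g_def by simp
  then have F1: "?D13 * ?s1 h = ?x1 * g - ?x3 * ?s1 (?s2 g)"
    using arg_cong[OF E2, of ?s1] by (simp add: xdiff_def)
  have F2: "?D13 * ?s2 g = ?x1 * ?s2 f - ?x3 * ?s2 (?s1 f)"
    using arg_cong[OF E1, of ?s2] by (simp add: xdiff_def)
  have F3: "?D2 * ?s1 (?s2 g) = ?x2 * ?s1 (?s2 f) - ?x3 * ?s1 (?s2 (?s1 f))"
    using arg_cong[OF E1, of "\<lambda>u. ?s1 (?s2 u)"] by (simp add: xdiff_def)
  have "?D1 * ?D2 * ?D13 * piop a h = ?D2 * ?D13 * (?D1 * piop a h)"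
    by (simp only: ac_simps)
  also have "\<dots> = ?D2 * ?D13 * (?x1 * h - ?x2 * ?s1 h)"
    by (simp only: xdiff_mult_piop)
  also have "\<dots> = ?x1 * ?D13 * (?D2 * h) - ?x2 * ?D2 * (?D13 * ?s1 h)"
    by (simp add: algebra_simps)
  also have "\<dots> = ?x1 * ?x2 * (?D1 * g) - ?x1 * ?x3 * (?D13 * ?s2 g) + ?x2 * ?x3 * (?D2 * ?s1 (?s2 g))"
    unfolding E2 F1 by (simp add: xdiff_def algebra_simps)
  also have "\<dots> = ?rhs"
    by (simp only: E1 F2 F3)
  finally show ?thesis
    by (simp only: g_def h_def)
qed

lemma vandermonde_mult_piop_bab:
  "xdiff a * xdiff (Suc a) * (X a - X (Suc (Suc a))) * piop (Suc a) (piop a (piop (Suc a) f))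
   = X a ^ 2 * (X (Suc a) * f - X (Suc (Suc a)) * sact (Suc a) f)
     - X (Suc a) ^ 2 * (X a * sact a f - X (Suc (Suc a)) * sact a (sact (Suc a) f))
     + X (Suc (Suc a)) ^ 2 * (X a * sact (Suc a) (sact a f)
         - X (Suc a) * sact (Suc a) (sact a (sact (Suc a) f)))"
  (is "?D1 * ?D2 * ?D13 * _ = ?rhs")
proof -
  let ?x1 = "X a" and ?x2 = "X (Suc a)" and ?x3 = "X (Suc (Suc a))"
  let ?s1 = "sact a" and ?s2 = "sact (Suc a)"
  define g where "g = piop (Suc a) f"
  define h where "h = piop a g"
  have E1: "?D2 * g = ?x2 * f - ?x3 * ?s2 f"
    unfolding g_def by (rule xdiff_mult_piop)
  have E2: "?D1 * h = ?x1 * g - ?x2 * ?s1 g"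
    unfolding h_def by (rule xdiff_mult_piop)
  have "?s2 g = g"
    unfolding g_def by simp
  then have G1: "?D13 * ?s2 h = ?x1 * g - ?x3 * ?s2 (?s1 g)"
    using arg_cong[OF E2, of ?s2] by (simp add: xdiff_def)
  have G2: "?D13 * ?s1 g = ?x1 * ?s1 f - ?x3 * ?s1 (?s2 f)"
    using arg_cong[OF E1, of ?s1] by (simp add: xdiff_def)
  have G3: "?D1 * ?s2 (?s1 g) = ?x1 * ?s2 (?s1 f) - ?x2 * ?s2 (?s1 (?s2 f))"
    using arg_cong[OF E1, of "\<lambda>u. ?s2 (?s1 u)"] by (simp add: xdiff_def)
  have "?D1 * ?D2 * ?D13 * piop (Suc a) h = ?D1 * ?D13 * (?D2 * piop (Suc a) h)"
    by (simp only: ac_simps)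
  also have "\<dots> = ?D1 * ?D13 * (?x2 * h - ?x3 * ?s2 h)"
    by (simp only: xdiff_mult_piop)
  also have "\<dots> = ?x2 * ?D13 * (?D1 * h) - ?x3 * ?D1 * (?D13 * ?s2 h)"
    by (simp add: algebra_simps)
  also have "\<dots> = ?x1 ^ 2 * (?D2 * g) - ?x2 ^ 2 * (?D13 * ?s1 g) + ?x3 ^ 2 * (?D1 * ?s2 (?s1 g))"
    unfolding E2 G1 by (simp add: xdiff_def algebra_simps power2_eq_square)
  also have "\<dots> = ?rhs"
    by (simp only: E1 G2 G3)
  finally show ?thesis
    by (simp only: g_def h_def)
qed

lemma piop_braid: "piop a (piop (Suc a) (piop a f)) = piop (Suc a) (piop a (piop (Suc a) f))"
proof -
  let ?V = "xdiff a * xdiff (Suc a) * (X a - X (Suc (Suc a)))"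
  have "?V \<noteq> 0"
    using xdiff_nonzero X_inj[of a "Suc (Suc a)"] by auto
  moreover have "?V * piop a (piop (Suc a) (piop a f)) = ?V * piop (Suc a) (piop a (piop (Suc a) f))"
    unfolding vandermonde_mult_piop_aba vandermonde_mult_piop_bab sact_braid
    by (simp add: algebra_simps power2_eq_square)
  ultimately show ?thesis
    by simp
qed

lemma theta_braid:
  "thetaop a (thetaop (Suc a) (thetaop a f)) = thetaop (Suc a) (thetaop a (thetaop (Suc a) f))"
proof -
  have theta: "thetaop i g = piop i g - g" for i g
    by (simp add: piop_eq_theta)
  show ?thesis
    by (simp add: theta piop_add piop_diff piop_braid algebra_simps)
qed

section \<open>Reduced words and Matsumoto's theorem for \<open>\<theta>\<close>\<close>

definition finite_perm :: "(nat \<Rightarrow> nat) \<Rightarrow> bool" where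
  "finite_perm w \<longleftrightarrow> (\<exists>N. w permutes {..<N})"

definition inversions :: "(nat \<Rightarrow> nat) \<Rightarrow> nat" where
  "inversions w = card {(x, y). x < y \<and> w y < w x}"

text \<open>A left descent: \<open>s\<^sub>a w\<close> is shorter than \<open>w\<close>.\<close>

definition descent :: "(nat \<Rightarrow> nat) \<Rightarrow> nat \<Rightarrow> bool" where
  "descent w a \<longleftrightarrow> inv w (Suc a) < inv w a"

lemma finite_perm_sidx: "finite_perm (sidx i)"
  unfolding finite_perm_def using sidx_permutes[of i "{..<Suc (Suc i)}"] by auto

lemma finite_perm_id: "finite_perm id"
  unfolding finite_perm_def using permutes_id by blast

lemma finite_perm_comp: "finite_perm w \<Longrightarrow> finite_perm v \<Longrightarrow> finite_perm (w \<circ> v)"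
proof -
  assume "finite_perm w" "finite_perm v"
  then obtain N M where "w permutes {..<N}" "v permutes {..<M}"
    unfolding finite_perm_def by blast
  then have "w permutes {..<max N M}" "v permutes {..<max N M}"
    by (auto intro: permutes_subset)
  then show "finite_perm (w \<circ> v)"
    unfolding finite_perm_def by (metis permutes_compose)
qed

lemma finite_perm_sidx_comp: "finite_perm w \<Longrightarrow> finite_perm (sidx a \<circ> w)"
  by (rule finite_perm_comp[OF finite_perm_sidx])

lemma finite_perm_bij: "finite_perm w \<Longrightarrow> bij w"
  unfolding finite_perm_def using permutes_bij by blast

lemma finite_perm_inv: "finite_perm w \<Longrightarrow> finite_perm (inv w)"
  unfolding finite_perm_def using permutes_inv by blast

lemma permutes_atLeastAtMost_finite_perm: "w permutes {1..n} \<Longrightarrow> finite_perm w"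
proof -
  assume "w permutes {1..n}"
  moreover have "{1..n} \<subseteq> {..<Suc n}"
    by auto
  ultimately show "finite_perm w"
    unfolding finite_perm_def by (blast intro: permutes_subset)
qed

lemma inv_sidx_comp: "finite_perm w \<Longrightarrow> inv (sidx a \<circ> w) = inv w \<circ> sidx a"
  by (simp add: o_inv_distrib finite_perm_bij bij_sidx inv_sidx)

lemma inv_comp_sidx: "finite_perm w \<Longrightarrow> inv (w \<circ> sidx a) = sidx a \<circ> inv w"
  by (simp add: o_inv_distrib finite_perm_bij bij_sidx inv_sidx)

lemma finite_inversion_set: "finite_perm w \<Longrightarrow> finite {(x, y). x < y \<and> w y < w x}"
proof -
  assume "finite_perm w"
  then obtain N where N: "w permutes {..<N}"
    unfolding finite_perm_def by blast
  have "y < N" if "x < y" "w y < w x" for x y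
  proof (rule ccontr)
    assume "\<not> y < N"
    then have "w y = y"
      using permutes_not_in[OF N] by simp
    moreover have "w x < N \<or> w x = x"
      using permutes_in_image[OF N] permutes_not_in[OF N] by (cases "x < N") auto
    ultimately show False
      using that \<open>\<not> y < N\<close> by auto
  qed
  then have "{(x, y). x < y \<and> w y < w x} \<subseteq> {..<N} \<times> {..<N}"
    using less_trans by blast
  then show ?thesis
    by (rule finite_subset) auto
qed

lemma inversions_inv:
  assumes w: "finite_perm w"
  shows "inversions (inv w) = inversions w"
proof -
  have b: "bij w"
    using finite_perm_bij[OF w] .
  have i1: "inv w (w x) = x" and i2: "w (inv w x) = x" for x
    using b by (simp_all add: bij_is_inj bij_is_surj surj_f_inv_f)
  have "bij_betw (\<lambda>(x, y). (w y, w x)) {(x, y). x < y \<and> w y < w x} {(x, y). x < y \<and> inv w y < inv w x}"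
    by (rule bij_betw_byWitness[where f' = "\<lambda>(u, v). (inv w v, inv w u)"]) (auto simp: i1 i2)
  then show ?thesis
    unfolding inversions_def by (simp add: bij_betw_same_card)
qed

lemma sidx_comp_sidx_comp [simp]: "sidx a \<circ> (sidx a \<circ> w) = w"
  by (simp add: fun_eq_iff)

lemma sidx_less_sidx_iff: "sidx a u < sidx a v \<longleftrightarrow>
  (if u = a \<and> v = Suc a then False else if u = Suc a \<and> v = a then True else u < v)"
  by (auto simp: sidx_def)

lemma descent_sidx_comp_iff:
  "finite_perm w \<Longrightarrow> descent (sidx c \<circ> w) d \<longleftrightarrow> inv w (sidx c (Suc d)) < inv w (sidx c d)"
  unfolding descent_def by (simp add: inv_sidx_comp)

lemma descent_sidx_comp_self:
  assumes w: "finite_perm w"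
  shows "descent (sidx a \<circ> w) a \<longleftrightarrow> \<not> descent w a"
proof -
  have "inj (inv w)"
    using finite_perm_bij[OF w] by (simp add: bij_imp_bij_inv bij_is_inj)
  then have "inv w a \<noteq> inv w (Suc a)"
    by (metis injD n_not_Suc_n)
  then show ?thesis
    unfolding descent_sidx_comp_iff[OF w] by (auto simp: descent_def)
qed

lemma descent_sidx_comp_commute:
  "finite_perm w \<Longrightarrow> Suc a < b \<or> Suc b < a \<Longrightarrow> descent (sidx b \<circ> w) a = descent w a"
  by (simp only: descent_sidx_comp_iff) (auto simp add: descent_def sidx_def)

lemma inversions_sidx_comp_descent:
  assumes w: "finite_perm w" and d: "descent w a"
  shows "inversions w = Suc (inversions (sidx a \<circ> w))"
proof -
  define p where "p = inv w a"
  define q where "q = inv w (Suc a)"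
  have wp: "w p = a" and wq: "w q = Suc a"
    unfolding p_def q_def using finite_perm_bij[OF w] by (simp_all add: bij_is_surj surj_f_inv_f)
  have wx: "w x = a \<longleftrightarrow> x = p" "w x = Suc a \<longleftrightarrow> x = q" for x
    using finite_perm_bij[OF w] wp wq by (metis bij_pointE)+
  have qp: "q < p"
    using d unfolding descent_def p_def q_def .
  let ?I = "{(x, y). x < y \<and> w y < w x}"
  have eq: "{(x, y). x < y \<and> (sidx a \<circ> w) y < (sidx a \<circ> w) x} = ?I - {(q, p)}"
    using qp by (auto simp: sidx_less_sidx_iff wx)
  have "(q, p) \<in> ?I"
    using qp wp wq by auto
  then show ?thesis
    unfolding inversions_def eq by (rule card.remove[OF finite_inversion_set[OF w]])
qed

lemma inversions_sidx_comp_not_descent: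
  assumes "finite_perm w" and "\<not> descent w a"
  shows "inversions (sidx a \<circ> w) = Suc (inversions w)"
  using inversions_sidx_comp_descent[of "sidx a \<circ> w" a] assms
  by (simp add: finite_perm_sidx_comp descent_sidx_comp_self)

lemma inversions_comp_sidx_descent:
  assumes w: "finite_perm w" and d: "w (Suc q) < w q"
  shows "inversions w = Suc (inversions (w \<circ> sidx q))"
proof -
  have "descent (inv w) q"
    using d by (simp add: descent_def inv_inv_eq finite_perm_bij[OF w])
  then have "inversions (inv w) = Suc (inversions (sidx q \<circ> inv w))"
    by (rule inversions_sidx_comp_descent[OF finite_perm_inv[OF w]])
  moreover have "inversions (sidx q \<circ> inv w) = inversions (w \<circ> sidx q)"
    using inversions_inv[OF finite_perm_comp[OF w finite_perm_sidx]] by (simp add: inv_comp_sidx[OF w])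
  ultimately show ?thesis
    by (simp add: inversions_inv[OF w])
qed

lemma inversions_id: "inversions id = 0"
  unfolding inversions_def by (auto simp: card_eq_0_iff)

lemma word_perm_Nil [simp]: "word_perm [] = id"
  by (simp add: word_perm_def)

lemma word_perm_Cons [simp]: "word_perm (a # ws) = sidx a \<circ> word_perm ws"
  by (simp add: word_perm_def)

lemma word_perm_snoc: "word_perm (ws @ [q]) = word_perm ws \<circ> sidx q"
  by (induct ws) auto

lemma finite_perm_word_perm: "finite_perm (word_perm ws)"
  by (induct ws) (simp_all only: word_perm_Nil word_perm_Cons finite_perm_id finite_perm_sidx_comp)

lemma word_perm_0: "\<forall>i\<in>set ws. 1 \<le> i \<Longrightarrow> word_perm ws 0 = 0"
  by (induct ws) (auto simp: sidx_def)

lemma inversions_word_perm_le: "inversions (word_perm ws) \<le> length ws"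
proof (induct ws)
  case Nil
  then show ?case
    by (simp only: word_perm_Nil inversions_id)
next
  case (Cons a ws)
  have "inversions (sidx a \<circ> word_perm ws) \<le> Suc (inversions (word_perm ws))"
    using inversions_sidx_comp_descent[OF finite_perm_word_perm, of ws a]
      inversions_sidx_comp_not_descent[OF finite_perm_word_perm, of ws a]
    by (cases "descent (word_perm ws) a") simp_all
  with Cons show ?case
    unfolding word_perm_Cons length_Cons by linarith
qed

lemma strict_mono_surj_eq_id:
  fixes f :: "nat \<Rightarrow> nat"
  assumes mono: "strict_mono f" and surj: "surj f"
  shows "f = id"
proof -
  have "f n = n" for n
  proof (induction n rule: less_induct)
    case (less n)
    obtain m where m: "f m = n"
      using surj by (metis surjD)
    then have "n \<le> m"
      using less by (metis less_irrefl not_le_imp_less)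
    then have "f n \<le> n"
      using m mono by (metis strict_mono_less_eq)
    then show ?case
      using strict_mono_imp_increasing[OF mono] le_antisym by blast
  qed
  then show ?thesis
    by auto
qed

lemma no_descent_eq_id:
  assumes w: "finite_perm w" and no_descent: "\<And>a. \<not> descent w a"
  shows "w = id"
proof -
  have bij: "bij (inv w)"
    using finite_perm_bij[OF w] by (simp add: bij_imp_bij_inv)
  have "inv w a < inv w (Suc a)" for a
    using no_descent[of a] bij unfolding descent_def by (metis bij_pointE n_not_Suc_n linorder_neqE_nat)
  then have "inv w = id"
    using bij by (intro strict_mono_surj_eq_id) (auto simp: strict_mono_Suc_iff bij_is_surj)
  then show ?thesis
    by (metis finite_perm_bij[OF w] inv_id inv_inv_eq)
qed

lemma word_of_length_inversions:
  assumes "finite_perm w" "w 0 = 0"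
  shows "\<exists>ws. (\<forall>i\<in>set ws. 1 \<le> i) \<and> word_perm ws = w \<and> length ws = inversions w"
  using assms
proof (induct "inversions w" arbitrary: w rule: less_induct)
  case less
  show ?case
  proof (cases "\<exists>a. descent w a")
    case False
    then have "w = id"
      using no_descent_eq_id less.prems by blast
    then show ?thesis
      by (intro exI[of _ "[]"]) (simp add: inversions_id)
  next
    case True
    then obtain a where a: "descent w a"
      by blast
    have "inv w 0 = 0"
      using finite_perm_bij[OF less.prems(1)] less.prems(2) by (metis bij_inv_eq_iff)
    then have "1 \<le> a"
      using a unfolding descent_def by (cases a) auto
    moreover have "inversions w = Suc (inversions (sidx a \<circ> w))"
      by (rule inversions_sidx_comp_descent[OF less.prems(1) a])
    moreover have "(sidx a \<circ> w) 0 = 0"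
      using less.prems(2) \<open>1 \<le> a\<close> by simp
    ultimately obtain ws where "\<forall>i\<in>set ws. 1 \<le> i" "word_perm ws = sidx a \<circ> w"
        "length ws = inversions (sidx a \<circ> w)"
      using less.hyps[of "sidx a \<circ> w"] finite_perm_sidx_comp[OF less.prems(1)] by auto
    with \<open>1 \<le> a\<close> \<open>inversions w = _\<close> show ?thesis
      by (intro exI[of _ "a # ws"]) (auto simp flip: comp_assoc)
  qed
qed

lemma perm_length_eq_inversions:
  assumes "finite_perm w" "w 0 = 0"
  shows "perm_length w = inversions w"
  unfolding perm_length_def
proof (rule Least_equality)
  show "\<exists>ws. length ws = inversions w \<and> (\<forall>i\<in>set ws. 1 \<le> i) \<and> word_perm ws = w"
    using word_of_length_inversions[OF assms] by blast
  show "inversions w \<le> l" if "\<exists>ws. length ws = l \<and> (\<forall>i\<in>set ws. 1 \<le> i) \<and> word_perm ws = w" for l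
    using that inversions_word_perm_le by blast
qed

definition reduced :: "nat list \<Rightarrow> bool" where
  "reduced ws \<longleftrightarrow> (\<forall>i\<in>set ws. 1 \<le> i) \<and> length ws = inversions (word_perm ws)"

lemma reduced_word_iff: "reduced_word ws w \<longleftrightarrow> reduced ws \<and> word_perm ws = w"
  using perm_length_eq_inversions[OF finite_perm_word_perm word_perm_0]
  unfolding reduced_word_def reduced_def by metis

lemma reduced_exists: "finite_perm w \<Longrightarrow> w 0 = 0 \<Longrightarrow> \<exists>ws. reduced ws \<and> word_perm ws = w"
  using word_of_length_inversions unfolding reduced_def by metis

lemma reduced_Cons_iff: "reduced (a # u) \<longleftrightarrow> 1 \<le> a \<and> reduced u \<and> \<not> descent (word_perm u) a"
proof (cases "descent (word_perm u) a")
  case True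
  then have "inversions (sidx a \<circ> word_perm u) < length u"
    using inversions_sidx_comp_descent[OF finite_perm_word_perm True] inversions_word_perm_le[of u] by simp
  with True show ?thesis
    unfolding reduced_def by auto
next
  case False
  then show ?thesis
    using inversions_sidx_comp_not_descent[OF finite_perm_word_perm False] unfolding reduced_def by auto
qed

lemma reduced_length: "reduced ws \<Longrightarrow> length ws = inversions (word_perm ws)"
  by (simp add: reduced_def)

lemma descent_reduced_Cons: "reduced (a # u) \<Longrightarrow> descent (word_perm (a # u)) a"
  using descent_sidx_comp_self[OF finite_perm_word_perm] by (simp add: reduced_Cons_iff)

lemma reduced_Cons_exists:
  assumes r: "reduced ws" and d: "descent (word_perm ws) b"
  obtains z where "reduced (b # z)" "word_perm (b # z) = word_perm ws"
proof -
  let ?w = "word_perm ws"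
  have w: "finite_perm ?w"
    by (rule finite_perm_word_perm)
  have w0: "?w 0 = 0"
    using r word_perm_0 unfolding reduced_def by blast
  then have "inv ?w 0 = 0"
    using finite_perm_bij[OF w] by (metis bij_inv_eq_iff)
  then have b: "1 \<le> b"
    using d unfolding descent_def by (cases b) auto
  have "(sidx b \<circ> ?w) 0 = 0"
    using w0 b by simp
  then obtain z where z: "reduced z" "word_perm z = sidx b \<circ> ?w"
    using reduced_exists[OF finite_perm_sidx_comp[OF w]] by blast
  have "reduced (b # z)"
    using b z d descent_sidx_comp_self[OF w] by (simp add: reduced_Cons_iff)
  moreover have "word_perm (b # z) = ?w"
    using z(2) by simp
  ultimately show ?thesis
    by (rule that)
qed

lemma theta_word_Cons: "theta_word (a # u) = thetaop a \<circ> theta_word u"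
  by (simp add: theta_word_def fun_eq_iff)

lemma theta_word_descent_split:
  assumes IH: "\<And>y y'. length y < n \<Longrightarrow> reduced y \<Longrightarrow> reduced y' \<Longrightarrow> word_perm y = word_perm y' \<Longrightarrow>
      theta_word y = theta_word y'"
    and u: "reduced u" "length u < n" and d: "descent (word_perm u) b"
  obtains z where "reduced z" "word_perm z = sidx b \<circ> word_perm u" "length u = Suc (length z)"
    "theta_word u = thetaop b \<circ> theta_word z"
proof -
  obtain z where z: "reduced (b # z)" "word_perm (b # z) = word_perm u"
    using reduced_Cons_exists[OF u(1) d] .
  have "theta_word u = thetaop b \<circ> theta_word z"
    using IH[OF u(2) u(1) z(1) z(2)[symmetric]] by (simp add: theta_word_Cons)
  moreover have "length u = Suc (length z)"
    using reduced_length[OF z(1)] reduced_length[OF u(1)] z(2) by simp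
  moreover have "word_perm z = sidx b \<circ> word_perm u"
    using z(2) by (auto simp flip: z(2))
  ultimately show ?thesis
    using z(1) reduced_Cons_iff that by blast
qed

lemma theta_word_commute_step:
  assumes IH: "\<And>y y'. length y < n \<Longrightarrow> reduced y \<Longrightarrow> reduced y' \<Longrightarrow> word_perm y = word_perm y' \<Longrightarrow>
      theta_word y = theta_word y'"
    and ab: "Suc a < b \<or> Suc b < a"
    and r1: "reduced (a # u)" and r2: "reduced (b # v)" and e: "word_perm (a # u) = word_perm (b # v)"
    and n: "length (a # u) = n"
  shows "theta_word (a # u) = theta_word (b # v)"
proof -
  define w where "w = word_perm (a # u)"
  have w: "finite_perm w"
    unfolding w_def by (rule finite_perm_word_perm)
  have da: "descent w a" and db: "descent w b"
    using descent_reduced_Cons[OF r1] descent_reduced_Cons[OF r2] unfolding w_def e by simp_all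
  have ru: "reduced u" and rv: "reduced v"
    using r1 r2 reduced_Cons_iff by blast+
  have wu: "word_perm u = sidx a \<circ> w"
    unfolding w_def by simp
  have wv: "word_perm v = sidx b \<circ> w"
    unfolding w_def e by simp
  have lu: "length u < n" and lv: "length v < n"
    using n reduced_length[OF r1] reduced_length[OF r2] e by (metis length_Cons lessI)+
  have "descent (word_perm u) b"
    unfolding wu using descent_sidx_comp_commute[OF w] ab db by blast
  then obtain z1 where z1: "reduced z1" "word_perm z1 = sidx b \<circ> (sidx a \<circ> w)"
      "length u = Suc (length z1)" "theta_word u = thetaop b \<circ> theta_word z1"
    using theta_word_descent_split[OF IH ru lu] unfolding wu by blast
  have "descent (word_perm v) a"
    unfolding wv using descent_sidx_comp_commute[OF w] ab da by blast
  then obtain z2 where z2: "reduced z2" "word_perm z2 = sidx a \<circ> (sidx b \<circ> w)"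
      "theta_word v = thetaop a \<circ> theta_word z2"
    using theta_word_descent_split[OF IH rv lv] unfolding wv by blast
  have "word_perm z1 = word_perm z2"
    unfolding z1(2) z2(2) using sidx_commute[OF ab] by (auto simp: fun_eq_iff)
  then have "theta_word z1 = theta_word z2"
    using IH[OF _ z1(1) z2(1)] z1(3) lu by simp
  then show ?thesis
    using z1(4) z2(3) theta_commute[OF ab] by (simp add: theta_word_Cons fun_eq_iff)
qed

lemma theta_word_braid_step:
  assumes IH: "\<And>y y'. length y < n \<Longrightarrow> reduced y \<Longrightarrow> reduced y' \<Longrightarrow> word_perm y = word_perm y' \<Longrightarrow>
      theta_word y = theta_word y'"
    and r1: "reduced (a # u)" and r2: "reduced (Suc a # v)" and e: "word_perm (a # u) = word_perm (Suc a # v)"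
    and n: "length (a # u) = n"
  shows "theta_word (a # u) = theta_word (Suc a # v)"
proof -
  define w where "w = word_perm (a # u)"
  have w: "finite_perm w"
    unfolding w_def by (rule finite_perm_word_perm)
  have w': "finite_perm (sidx c \<circ> w)" for c
    by (rule finite_perm_sidx_comp[OF w])
  have d1: "inv w (Suc a) < inv w a" and d2: "inv w (Suc (Suc a)) < inv w (Suc a)"
    using descent_reduced_Cons[OF r1] descent_reduced_Cons[OF r2] unfolding w_def e descent_def by simp_all
  have ru: "reduced u" and rv: "reduced v"
    using r1 r2 reduced_Cons_iff by blast+
  have wu: "word_perm u = sidx a \<circ> w"
    unfolding w_def by simp
  have wv: "word_perm v = sidx (Suc a) \<circ> w"
    unfolding w_def e by simp
  have lu: "length u < n" and lv: "length v < n"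
    using n reduced_length[OF r1] reduced_length[OF r2] e by (metis length_Cons lessI)+
  have "descent (word_perm u) (Suc a)"
    unfolding wu descent_sidx_comp_iff[OF w] using d1 d2 by simp
  then obtain z1 where z1: "reduced z1" "word_perm z1 = sidx (Suc a) \<circ> (sidx a \<circ> w)"
      "length u = Suc (length z1)" "theta_word u = thetaop (Suc a) \<circ> theta_word z1"
    using theta_word_descent_split[OF IH ru lu] unfolding wu by blast
  have lz1: "length z1 < n"
    using z1(3) lu by simp
  have "descent (word_perm z1) a"
    unfolding z1(2) descent_sidx_comp_iff[OF w'] inv_sidx_comp[OF w] using d2 by simp
  then obtain z where z: "reduced z" "word_perm z = sidx a \<circ> (sidx (Suc a) \<circ> (sidx a \<circ> w))"
      "length z1 = Suc (length z)" "theta_word z1 = thetaop a \<circ> theta_word z"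
    using theta_word_descent_split[OF IH z1(1) lz1] unfolding z1(2) by blast
  have "descent (word_perm v) a"
    unfolding wv descent_sidx_comp_iff[OF w] using d1 d2 by simp
  then obtain y1 where y1: "reduced y1" "word_perm y1 = sidx a \<circ> (sidx (Suc a) \<circ> w)"
      "length v = Suc (length y1)" "theta_word v = thetaop a \<circ> theta_word y1"
    using theta_word_descent_split[OF IH rv lv] unfolding wv by blast
  have ly1: "length y1 < n"
    using y1(3) lv by simp
  have "descent (word_perm y1) (Suc a)"
    unfolding y1(2) descent_sidx_comp_iff[OF w'] inv_sidx_comp[OF w] using d1 by simp
  then obtain y where y: "reduced y" "word_perm y = sidx (Suc a) \<circ> (sidx a \<circ> (sidx (Suc a) \<circ> w))"
      "theta_word y1 = thetaop (Suc a) \<circ> theta_word y"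
    using theta_word_descent_split[OF IH y1(1) ly1] unfolding y1(2) by blast
  have "word_perm y = word_perm z"
    unfolding y(2) z(2) by (simp add: fun_eq_iff sidx_braid)
  then have "theta_word y = theta_word z"
    using IH[OF _ y(1) z(1)] reduced_length[OF y(1)] reduced_length[OF z(1)] z(3) lz1 by simp
  then show ?thesis
    using z1(4) z(4) y1(4) y(3) theta_braid[of a] by (simp add: theta_word_Cons fun_eq_iff)
qed

theorem theta_word_reduced_eq:
  "reduced ws \<Longrightarrow> reduced ws' \<Longrightarrow> word_perm ws = word_perm ws' \<Longrightarrow> theta_word ws = theta_word ws'"
proof (induction "length ws" arbitrary: ws ws' rule: less_induct)
  case less
  have IH: "\<And>y y'. length y < length ws \<Longrightarrow> reduced y \<Longrightarrow> reduced y' \<Longrightarrow> word_perm y = word_perm y' \<Longrightarrow>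
      theta_word y = theta_word y'"
    using less.hyps by blast
  have len: "length ws' = length ws"
    using reduced_length[OF less.prems(1)] reduced_length[OF less.prems(2)] less.prems(3) by simp
  show ?case
  proof (cases ws)
    case Nil
    then show ?thesis
      using len by simp
  next
    case (Cons a u)
    then obtain b v where ws': "ws' = b # v"
      using len by (cases ws') auto
    note r = less.prems[unfolded Cons ws']
    have n: "length (a # u) = length ws" "length (b # v) = length ws"
      using Cons ws' len by simp_all
    consider (eq) "a = b" | (far) "Suc a < b \<or> Suc b < a" | (up) "b = Suc a" | (down) "a = Suc b"
      by linarith
    then have "theta_word (a # u) = theta_word (b # v)"
    proof cases
      case eq
      have "word_perm u = word_perm v"
        using r(3) eq by (metis sidx_comp_sidx_comp word_perm_Cons)
      moreover have "length u < length ws"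
        using n by simp
      ultimately have "theta_word u = theta_word v"
        using IH r(1,2) reduced_Cons_iff by blast
      then show ?thesis
        using eq by (simp add: theta_word_Cons)
    next
      case far
      show ?thesis
        by (rule theta_word_commute_step[OF IH far r n(1)])
    next
      case up
      show ?thesis
        using theta_word_braid_step[OF IH r(1) r(2,3)[unfolded up] n(1)] up by blast
    next
      case down
      have "theta_word (b # v) = theta_word (a # u)"
        using theta_word_braid_step[OF IH r(2) r(1)[unfolded down] r(3)[symmetric, unfolded down] n(2)] down
        by blast
      then show ?thesis ..
    qed
    then show ?thesis
      using Cons ws' by blast
  qed
qed

lemma theta_perm_reduced: "reduced ws \<Longrightarrow> theta_perm (word_perm ws) = theta_word ws"
proof -
  assume r: "reduced ws"
  have "reduced_word ws (word_perm ws)"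
    using r reduced_word_iff by blast
  then have "reduced_word (SOME ws'. reduced_word ws' (word_perm ws)) (word_perm ws)"
    by (rule someI)
  then show ?thesis
    unfolding theta_perm_def reduced_word_iff using theta_word_reduced_eq r by blast
qed

section \<open>The minimal permutation sorting a weak composition\<close>

text \<open>Entries of a weak composition are indexed from 1 as in the paper, so the entry at
  position \<open>q\<close> of a list \<open>g\<close> is \<open>g ! (q - 1)\<close>.\<close>

lemma length_sort_dec [simp]: "length (sort_dec g) = length g"
  by (simp add: sort_dec_def)

lemma mset_sort_dec [simp]: "mset (sort_dec g) = mset g"
  by (simp add: sort_dec_def)

lemma sort_dec_mset_eq: "mset g = mset g' \<Longrightarrow> sort_dec g = sort_dec g'"
  unfolding sort_dec_def using properties_for_sort[of "sort g'" g] by simp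

lemma sort_dec_antimono:
  "1 \<le> q \<Longrightarrow> q \<le> q' \<Longrightarrow> q' \<le> length g \<Longrightarrow> sort_dec g ! (q' - 1) \<le> sort_dec g ! (q - 1)"
  unfolding sort_dec_def by (simp add: rev_nth sorted_nth_mono)

definition sorting_perm :: "nat list \<Rightarrow> (nat \<Rightarrow> nat) \<Rightarrow> bool" where
  "sorting_perm g w \<longleftrightarrow>
     w permutes {1..length g} \<and> (\<forall>q\<in>{1..length g}. sort_dec g ! (q - 1) = g ! (w q - 1))"

lemma comp_act_sort_dec_eq_iff:
  assumes w: "w permutes {1..length g}"
  shows "comp_act w (sort_dec g) = g \<longleftrightarrow> (\<forall>q\<in>{1..length g}. sort_dec g ! (q - 1) = g ! (w q - 1))"
proof -
  let ?n = "length g"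
  have "comp_act w (sort_dec g) = g \<longleftrightarrow> (\<forall>p\<in>Suc ` {..<?n}. sort_dec g ! (inv w p - 1) = g ! (p - 1))"
    unfolding comp_act_def list_eq_iff_nth_eq by auto
  also have "Suc ` {..<?n} = w ` {1..?n}"
    using permutes_image[OF w] by (simp add: lessThan_atLeast0 atLeastLessThanSuc_atLeastAtMost)
  also have "(\<forall>p\<in>w ` {1..?n}. sort_dec g ! (inv w p - 1) = g ! (p - 1))
      \<longleftrightarrow> (\<forall>q\<in>{1..?n}. sort_dec g ! (q - 1) = g ! (w q - 1))"
    by (simp add: permutes_inverses(2)[OF w])
  finally show ?thesis .
qed

lemma image_mset_nth_pred: "image_mset (\<lambda>q. l ! (q - 1)) (mset_set {1..length l}) = mset l"
proof -
  have "mset_set {1..length l} = mset [1..<Suc (length l)]"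
    by (metis atLeastLessThanSuc_atLeastAtMost distinct_upt mset_set_set set_upt)
  moreover have "[1..<Suc (length l)] = map Suc [0..<length l]"
    by (simp only: map_Suc_upt One_nat_def)
  then have "map (\<lambda>q. l ! (q - 1)) [1..<Suc (length l)] = map (\<lambda>i. l ! i) [0..<length l]"
    by (simp only: map_map comp_def diff_Suc_1)
  ultimately show ?thesis
    by (metis map_nth mset_map)
qed

lemma sorting_perm_exists: "\<exists>w. sorting_perm g w"
proof -
  have "image_mset (\<lambda>q. sort_dec g ! (q - 1)) (mset_set {1..length g})
      = image_mset (\<lambda>q. g ! (q - 1)) (mset_set {1..length g})"
    using image_mset_nth_pred[of g] image_mset_nth_pred[of "sort_dec g"] by simp
  then obtain w where "w permutes {1..length g}" "\<forall>q\<in>{1..length g}. sort_dec g ! (q - 1) = g ! (w q - 1)"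
    by (rule image_mset_eq_implies_permutes[OF finite_atLeastAtMost])
  then show ?thesis
    unfolding sorting_perm_def by blast
qed

lemma sorting_perm_permutes: "sorting_perm g w \<Longrightarrow> w permutes {1..length g}"
  by (simp add: sorting_perm_def)

lemma sorting_perm_nth: "sorting_perm g w \<Longrightarrow> q \<in> {1..length g} \<Longrightarrow> sort_dec g ! (q - 1) = g ! (w q - 1)"
  by (simp add: sorting_perm_def)

lemma sorting_perm_finite_perm: "sorting_perm g w \<Longrightarrow> finite_perm w"
  by (rule permutes_atLeastAtMost_finite_perm[OF sorting_perm_permutes])

lemma sorting_perm_0: "sorting_perm g w \<Longrightarrow> w 0 = 0"
  using permutes_not_in[OF sorting_perm_permutes] by fastforce

lemma sorting_perm_in: "sorting_perm g w \<Longrightarrow> q \<in> {1..length g} \<Longrightarrow> w q \<in> {1..length g}"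
  using permutes_in_image[OF sorting_perm_permutes] by blast

lemma sorting_perm_inv_in: "sorting_perm g w \<Longrightarrow> p \<in> {1..length g} \<Longrightarrow> inv w p \<in> {1..length g}"
  using permutes_in_image[OF permutes_inv[OF sorting_perm_permutes]] by blast

lemma sorting_perm_inv_nth:
  "sorting_perm g w \<Longrightarrow> p \<in> {1..length g} \<Longrightarrow> sort_dec g ! (inv w p - 1) = g ! (p - 1)"
  using sorting_perm_nth[OF _ sorting_perm_inv_in] permutes_inverses(1)[OF sorting_perm_permutes] by metis

lemma perm_length_sorting_perm: "sorting_perm g w \<Longrightarrow> perm_length w = inversions w"
  by (rule perm_length_eq_inversions[OF sorting_perm_finite_perm sorting_perm_0])

lemma min_perm_sorting_perm: "sorting_perm g (min_perm g)"
  and inversions_min_perm_le: "sorting_perm g w \<Longrightarrow> inversions (min_perm g) \<le> inversions w"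
proof -
  have eq: "(\<lambda>w. w permutes {1..length g} \<and> comp_act w (sort_dec g) = g) = sorting_perm g"
    by (intro ext) (metis comp_act_sort_dec_eq_iff sorting_perm_def)
  have mp: "min_perm g = arg_min perm_length (sorting_perm g)"
    unfolding min_perm_def eq ..
  obtain w0 where w0: "sorting_perm g w0"
    using sorting_perm_exists by blast
  show "sorting_perm g (min_perm g)"
    unfolding mp using arg_min_nat_lemma[of "sorting_perm g" w0 perm_length] w0 by blast
  then show "inversions (min_perm g) \<le> inversions w" if "sorting_perm g w"
    using arg_min_nat_le[of "sorting_perm g" w perm_length] that perm_length_sorting_perm
    unfolding mp by metis
qed

definition ties_ordered :: "nat list \<Rightarrow> (nat \<Rightarrow> nat) \<Rightarrow> bool" where
  "ties_ordered g w \<longleftrightarrow> (\<forall>q q'. 1 \<le> q \<longrightarrow> q < q' \<longrightarrow> q' \<le> length g \<longrightarrow>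
     sort_dec g ! (q - 1) = sort_dec g ! (q' - 1) \<longrightarrow> w q < w q')"

lemma ties_orderedD:
  "ties_ordered g w \<Longrightarrow> 1 \<le> q \<Longrightarrow> q < q' \<Longrightarrow> q' \<le> length g \<Longrightarrow>
    sort_dec g ! (q - 1) = sort_dec g ! (q' - 1) \<Longrightarrow> w q < w q'"
  unfolding ties_ordered_def by blast

lemma min_perm_adjacent_tie:
  assumes q: "1 \<le> q" "Suc q \<le> length g" and tie: "sort_dec g ! (q - 1) = sort_dec g ! q"
  shows "min_perm g q < min_perm g (Suc q)"
proof (rule ccontr)
  let ?w = "min_perm g" and ?n = "length g"
  have w: "sorting_perm g ?w"
    by (rule min_perm_sorting_perm)
  assume "\<not> ?w q < ?w (Suc q)"
  moreover have "?w q \<noteq> ?w (Suc q)"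
    using permutes_inj[OF sorting_perm_permutes[OF w]] by (metis injD n_not_Suc_n)
  ultimately have descent: "?w (Suc q) < ?w q"
    by simp
  have s: "sidx q permutes {1..?n}"
    by (rule sidx_permutes) (use q in auto)
  have "sorting_perm g (?w \<circ> sidx q)"
    unfolding sorting_perm_def
  proof (intro conjI ballI)
    show "?w \<circ> sidx q permutes {1..?n}"
      by (rule permutes_compose[OF s sorting_perm_permutes[OF w]])
    fix x
    assume x: "x \<in> {1..?n}"
    have "sort_dec g ! (sidx q x - 1) = sort_dec g ! (x - 1)"
      using tie q by (auto simp: sidx_def)
    then show "sort_dec g ! (x - 1) = g ! ((?w \<circ> sidx q) x - 1)"
      using sorting_perm_nth[OF w permutes_in_image[OF s, THEN iffD2, OF x]] by simp
  qed
  then have "inversions ?w \<le> inversions (?w \<circ> sidx q)"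
    by (rule inversions_min_perm_le)
  then show False
    using inversions_comp_sidx_descent[OF sorting_perm_finite_perm[OF w] descent] by simp
qed

lemma ties_ordered_min_perm: "ties_ordered g (min_perm g)"
  unfolding ties_ordered_def
proof (intro allI impI)
  fix q q'
  assume q: "1 \<le> q" and qq': "q < q'" and q': "q' \<le> length g"
    and tie: "sort_dec g ! (q - 1) = sort_dec g ! (q' - 1)"
  show "min_perm g q < min_perm g q'"
    using qq' q' tie
  proof (induction q')
    case (Suc m)
    show ?case
    proof (cases "q = m")
      case True
      then show ?thesis
        using min_perm_adjacent_tie[OF q] Suc.prems by simp
    next
      case False
      then have m: "q < m" "m < length g"
        using Suc.prems by simp_all
      have "sort_dec g ! m \<le> sort_dec g ! (m - 1)" "sort_dec g ! (m - 1) \<le> sort_dec g ! (q - 1)"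
        using sort_dec_antimono[of m "Suc m" g] sort_dec_antimono[of q m g] q m by auto
      then have "sort_dec g ! (m - 1) = sort_dec g ! (q - 1)" "sort_dec g ! (m - 1) = sort_dec g ! m"
        using Suc.prems(3) by simp_all
      then have "min_perm g q < min_perm g m" "min_perm g m < min_perm g (Suc m)"
        using Suc.IH m min_perm_adjacent_tie[of m g] q by (auto simp: Suc_le_eq)
      then show ?thesis
        by simp
    qed
  qed simp
qed

text \<open>For a tie-ordered sorting permutation, \<open>w q\<close> is determined by counting: among the
  positions holding the value \<open>v\<close> of \<open>q\<close>, there are as many before \<open>w q\<close> in \<open>g\<close> as
  before \<open>q\<close> in the sorted composition.\<close>

lemma card_same_value_before:
  assumes w: "sorting_perm g w" and ties: "ties_ordered g w" and q: "q \<in> {1..length g}"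
  defines "v \<equiv> sort_dec g ! (q - 1)"
  shows "card {p \<in> {1..length g}. g ! (p - 1) = v \<and> p < w q}
       = card {q' \<in> {1..length g}. sort_dec g ! (q' - 1) = v \<and> q' < q}"
proof -
  let ?n = "length g"
  let ?A = "{q' \<in> {1..?n}. sort_dec g ! (q' - 1) = v \<and> q' < q}"
  have perm: "w permutes {1..?n}"
    by (rule sorting_perm_permutes[OF w])
  have "w ` ?A = {p \<in> {1..?n}. g ! (p - 1) = v \<and> p < w q}"
  proof (intro equalityI subsetI)
    fix p
    assume "p \<in> w ` ?A"
    then obtain q' where q': "q' \<in> {1..?n}" "sort_dec g ! (q' - 1) = v" "q' < q" "p = w q'"
      by blast
    have "w q' < w q"
      using ties_orderedD[OF ties, of q' q] q q' unfolding v_def by simp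
    then show "p \<in> {p \<in> {1..?n}. g ! (p - 1) = v \<and> p < w q}"
      using q' sorting_perm_in[OF w q'(1)] sorting_perm_nth[OF w q'(1)] by simp
  next
    fix p
    assume p: "p \<in> {p \<in> {1..?n}. g ! (p - 1) = v \<and> p < w q}"
    define q' where "q' = inv w p"
    have q': "q' \<in> {1..?n}" "w q' = p" "sort_dec g ! (q' - 1) = v"
      using p sorting_perm_inv_in[OF w] sorting_perm_inv_nth[OF w] permutes_inverses(1)[OF perm]
      unfolding q'_def by auto
    have "q' < q"
    proof (rule ccontr)
      assume "\<not> q' < q"
      then have "w q \<le> w q'"
        using ties_orderedD[OF ties, of q q'] q q' unfolding v_def by (cases "q = q'") auto
      then show False
        using p q' by simp
    qed
    then show "p \<in> w ` ?A"
      using q' by blast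
  qed
  moreover have "inj_on w ?A"
    using permutes_inj[OF perm] by (rule inj_on_subset) simp
  ultimately show ?thesis
    using card_image by fastforce
qed

lemma ties_ordered_sorting_perm_unique:
  assumes w: "sorting_perm g w" "ties_ordered g w" and w': "sorting_perm g w'" "ties_ordered g w'"
  shows "w = w'"
proof
  fix x
  show "w x = w' x"
  proof (cases "x \<in> {1..length g}")
    case False
    then show ?thesis
      using permutes_not_in[OF sorting_perm_permutes[OF w(1)]] permutes_not_in[OF sorting_perm_permutes[OF w'(1)]]
      by simp
  next
    case True
    let ?C = "\<lambda>y. {p \<in> {1..length g}. g ! (p - 1) = sort_dec g ! (x - 1) \<and> p < y}"
    have not_less: False if "sorting_perm g u" "sorting_perm g u'" "ties_ordered g u" "ties_ordered g u'"
      "u x < u' x" for u u'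
    proof -
      have "u x \<in> ?C (u' x)"
        using sorting_perm_in[OF that(1) True] sorting_perm_nth[OF that(1) True] that(5) by simp
      then have "?C (u x) \<subset> ?C (u' x)"
        using that(5) by auto
      then have "card (?C (u x)) < card (?C (u' x))"
        by (rule psubset_card_mono[rotated]) auto
      then show False
        using card_same_value_before[OF that(1,3) True] card_same_value_before[OF that(2,4) True] by simp
    qed
    show ?thesis
      using not_less[OF w(1) w'(1) w(2) w'(2)] not_less[OF w'(1) w(1) w'(2) w(2)] by (meson linorder_neqE_nat)
  qed
qed

lemma min_perm_eqI: "sorting_perm g w \<Longrightarrow> ties_ordered g w \<Longrightarrow> min_perm g = w"
  using ties_ordered_sorting_perm_unique min_perm_sorting_perm ties_ordered_min_perm by blast

section \<open>The operators \<open>\<theta>\<^sub>i\<close> on Demazure atoms\<close>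

lemma length_comp_act [simp]: "length (comp_act w g) = length g"
  by (simp add: comp_act_def)

lemma nth_comp_act_sidx: "j < length g \<Longrightarrow> comp_act (sidx i) g ! j = g ! (sidx i (Suc j) - 1)"
  by (simp add: comp_act_def inv_sidx)

lemma comp_act_sidx_eq_swap:
  assumes "1 \<le> i" "Suc i \<le> length g"
  shows "comp_act (sidx i) g = g[i - 1 := g ! i, i := g ! (i - 1)]"
  by (rule nth_equalityI) (use assms in \<open>auto simp: nth_comp_act_sidx nth_list_update sidx_def\<close>)

lemma sort_dec_comp_act_sidx:
  "1 \<le> i \<Longrightarrow> Suc i \<le> length g \<Longrightarrow> sort_dec (comp_act (sidx i) g) = sort_dec g"
  by (rule sort_dec_mset_eq) (simp add: comp_act_sidx_eq_swap mset_swap)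

lemma comp_act_sidx_sidx:
  assumes "1 \<le> i" "Suc i \<le> length g"
  shows "comp_act (sidx i) (comp_act (sidx i) g) = g"
  by (rule nth_equalityI) (use assms in \<open>auto simp: nth_comp_act_sidx sidx_def\<close>)

lemma sorting_perm_sidx_comp:
  assumes w: "sorting_perm g w" and i: "1 \<le> i" "Suc i \<le> length g"
  shows "sorting_perm (comp_act (sidx i) g) (sidx i \<circ> w)"
  unfolding sorting_perm_def length_comp_act sort_dec_comp_act_sidx[OF i]
proof (intro conjI ballI)
  show "sidx i \<circ> w permutes {1..length g}"
    using i by (intro permutes_compose[OF sorting_perm_permutes[OF w]] sidx_permutes) auto
  fix q
  assume q: "q \<in> {1..length g}"
  then have "w q \<in> {1..length g}"
    by (rule sorting_perm_in[OF w])
  then have "comp_act (sidx i) g ! ((sidx i \<circ> w) q - 1) = g ! (w q - 1)"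
    using i by (auto simp: nth_comp_act_sidx sidx_def)
  then show "sort_dec g ! (q - 1) = comp_act (sidx i) g ! ((sidx i \<circ> w) q - 1)"
    using sorting_perm_nth[OF w q] by simp
qed

lemma sorting_perm_descent_iff:
  assumes w: "sorting_perm g w" and i: "1 \<le> i" "Suc i \<le> length g" and ne: "g ! (i - 1) \<noteq> g ! i"
  shows "descent w i \<longleftrightarrow> g ! (i - 1) < g ! i"
proof -
  have i1: "i \<in> {1..length g}" and i2: "Suc i \<in> {1..length g}"
    using i by auto
  have vals: "sort_dec g ! (inv w i - 1) = g ! (i - 1)" "sort_dec g ! (inv w (Suc i) - 1) = g ! i"
    using sorting_perm_inv_nth[OF w i1] sorting_perm_inv_nth[OF w i2] by simp_all
  show ?thesis
    using sort_dec_antimono[of "inv w i" "inv w (Suc i)" g] sort_dec_antimono[of "inv w (Suc i)" "inv w i" g]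
      sorting_perm_inv_in[OF w i1] sorting_perm_inv_in[OF w i2] vals ne
    unfolding descent_def by (cases "inv w (Suc i) < inv w i") auto
qed

lemma min_perm_comp_act_sidx:
  assumes i: "1 \<le> i" "Suc i \<le> length g" and gt: "g ! i < g ! (i - 1)"
  shows "min_perm (comp_act (sidx i) g) = sidx i \<circ> min_perm g"
proof (rule min_perm_eqI)
  let ?w = "min_perm g"
  show "sorting_perm (comp_act (sidx i) g) (sidx i \<circ> ?w)"
    by (rule sorting_perm_sidx_comp[OF min_perm_sorting_perm i])
  show "ties_ordered (comp_act (sidx i) g) (sidx i \<circ> ?w)"
    unfolding ties_ordered_def length_comp_act sort_dec_comp_act_sidx[OF i]
  proof (intro allI impI)
    fix q q'
    assume q: "1 \<le> q" "q < q'" "q' \<le> length g" and tie: "sort_dec g ! (q - 1) = sort_dec g ! (q' - 1)"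
    have less: "?w q < ?w q'"
      using ties_orderedD[OF ties_ordered_min_perm q tie] .
    have "\<not> (?w q = i \<and> ?w q' = Suc i)"
      using tie gt sorting_perm_nth[OF min_perm_sorting_perm, of q g] sorting_perm_nth[OF min_perm_sorting_perm, of q' g] q
      by auto
    then show "(sidx i \<circ> ?w) q < (sidx i \<circ> ?w) q'"
      using less by (auto simp: sidx_less_sidx_iff)
  qed
qed

lemma theta_word_snoc: "theta_word (ws @ [q]) f = theta_word ws (thetaop q f)"
  by (simp add: theta_word_def)

lemma theta_word_zero: "theta_word ws 0 = 0"
  by (induct ws) (simp_all add: theta_word_def theta_invariant)

lemma atom_eq_theta_word: "reduced ws \<Longrightarrow> word_perm ws = min_perm g \<Longrightarrow> atom g = theta_word ws (xmon (sort_dec g))"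
  unfolding atom_def using theta_perm_reduced by metis

lemma theta_atom_ascent:
  assumes i: "1 \<le> i" "Suc i \<le> length g" and gt: "g ! i < g ! (i - 1)"
  shows "thetaop i (atom g) = atom (comp_act (sidx i) g)"
proof -
  let ?w = "min_perm g"
  obtain ws where ws: "reduced ws" "word_perm ws = ?w"
    using reduced_exists[OF sorting_perm_finite_perm sorting_perm_0, OF min_perm_sorting_perm min_perm_sorting_perm]
    by blast
  have "\<not> descent ?w i"
    using sorting_perm_descent_iff[OF min_perm_sorting_perm i] gt by simp
  then have "reduced (i # ws)"
    using ws i by (simp add: reduced_Cons_iff)
  moreover have "word_perm (i # ws) = min_perm (comp_act (sidx i) g)"
    using ws(2) min_perm_comp_act_sidx[OF i gt] by simp
  ultimately show ?thesis
    using atom_eq_theta_word[OF ws] atom_eq_theta_word sort_dec_comp_act_sidx[OF i]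
    by (simp add: theta_word_Cons)
qed

lemma sact_xmon_tie:
  assumes q: "1 \<le> q" "Suc q \<le> length l" and tie: "l ! (q - 1) = l ! q"
  shows "sact q (xmon l) = xmon l"
proof -
  let ?n = "length l"
  define t where "t j = sidx q (Suc j) - 1" for j
  have t: "sidx q (Suc j) = Suc (t j)" "t (t j) = j" "j < ?n \<Longrightarrow> t j < ?n" "l ! t j = l ! j" for j
    using q tie by (auto simp: t_def sidx_def)
  have "sact q (xmon l) = (\<Prod>j<?n. X (sidx q (Suc j)) ^ (l ! j))"
    unfolding xmon_def by (simp add: sact_prod)
  also have "\<dots> = (\<Prod>k<?n. X (Suc k) ^ (l ! k))"
    by (rule prod.reindex_bij_witness[of _ t t]) (simp_all add: t)
  finally show ?thesis
    unfolding xmon_def .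
qed

lemma reduced_snoc:
  assumes r: "reduced ws" and q: "1 \<le> q" and ascent: "word_perm ws q < word_perm ws (Suc q)"
  shows "reduced (ws @ [q])"
proof -
  let ?w = "word_perm ws"
  have "inversions (?w \<circ> sidx q) = Suc (inversions (?w \<circ> sidx q \<circ> sidx q))"
    by (rule inversions_comp_sidx_descent[OF finite_perm_comp[OF finite_perm_word_perm finite_perm_sidx]])
      (simp add: ascent)
  moreover have "?w \<circ> sidx q \<circ> sidx q = ?w"
    by (simp add: fun_eq_iff)
  ultimately have "inversions (?w \<circ> sidx q) = Suc (inversions ?w)"
    by (simp only:)
  then show ?thesis
    using r q unfolding reduced_def by (simp add: word_perm_snoc)
qed

lemma min_perm_tie:
  assumes i: "1 \<le> i" "Suc i \<le> length g" and tie: "g ! (i - 1) = g ! i"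
  obtains a where "a \<in> {1..length g}" "Suc a \<in> {1..length g}" "min_perm g a = i" "min_perm g (Suc a) = Suc i"
proof -
  let ?w = "min_perm g" and ?n = "length g"
  have w: "sorting_perm g ?w" and ties: "ties_ordered g ?w"
    by (rule min_perm_sorting_perm ties_ordered_min_perm)+
  have perm: "?w permutes {1..?n}"
    by (rule sorting_perm_permutes[OF w])
  have i1: "i \<in> {1..?n}" and i2: "Suc i \<in> {1..?n}"
    using i by auto
  define a where "a = inv ?w i"
  define b where "b = inv ?w (Suc i)"
  have ab: "a \<in> {1..?n}" "b \<in> {1..?n}" "?w a = i" "?w b = Suc i"
    unfolding a_def b_def using sorting_perm_inv_in[OF w] i1 i2 permutes_inverses(1)[OF perm] by auto
  have val: "sort_dec g ! (a - 1) = sort_dec g ! (b - 1)"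
    unfolding a_def b_def using sorting_perm_inv_nth[OF w i1] sorting_perm_inv_nth[OF w i2] tie by simp
  have "\<not> b < a"
  proof
    assume "b < a"
    then have "?w b < ?w a"
      using ties_orderedD[OF ties, of b a] ab val by simp
    then show False
      using ab by simp
  qed
  moreover have "a \<noteq> b"
    using ab by auto
  moreover have "\<not> Suc a < b"
  proof
    assume lt: "Suc a < b"
    have "sort_dec g ! (Suc a - 1) = sort_dec g ! (a - 1)"
      using sort_dec_antimono[of a "Suc a" g] sort_dec_antimono[of "Suc a" b g] ab lt val by simp
    then have "?w a < ?w (Suc a)" "?w (Suc a) < ?w b"
      using ties_orderedD[OF ties, of a "Suc a"] ties_orderedD[OF ties, of "Suc a" b] ab lt val by auto
    then show False
      using ab by simp
  qed
  ultimately have "b = Suc a"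
    by linarith
  then show ?thesis
    using that ab by simp
qed

lemma theta_atom_tie:
  assumes i: "1 \<le> i" "Suc i \<le> length g" and tie: "g ! (i - 1) = g ! i"
  shows "thetaop i (atom g) = 0"
proof -
  let ?w = "min_perm g"
  have w: "sorting_perm g ?w"
    by (rule min_perm_sorting_perm)
  obtain a where a: "a \<in> {1..length g}" "Suc a \<in> {1..length g}" "?w a = i" "?w (Suc a) = Suc i"
    using min_perm_tie[OF i tie] .
  obtain ws where ws: "reduced ws" "word_perm ws = ?w"
    using reduced_exists[OF sorting_perm_finite_perm[OF w] sorting_perm_0[OF w]] by blast
  have "inv ?w i = a" "inv ?w (Suc i) = Suc a"
    using a permutes_inverses(2)[OF sorting_perm_permutes[OF w]] by metis+
  then have r1: "reduced (i # ws)"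
    using ws i by (simp add: reduced_Cons_iff descent_def)
  have r2: "reduced (ws @ [a])"
    using reduced_snoc[OF ws(1)] ws(2) a by simp
  have "sidx i (?w x) = ?w (sidx a x)" for x
  proof (cases "x = a \<or> x = Suc a")
    case False
    then have "?w x \<noteq> i" "?w x \<noteq> Suc i"
      using a permutes_inj[OF sorting_perm_permutes[OF w]] by (metis injD)+
    then show ?thesis
      using False by simp
  qed (use a in auto)
  then have same_perm: "word_perm (i # ws) = word_perm (ws @ [a])"
    using ws(2) by (simp add: word_perm_snoc fun_eq_iff)
  have "sort_dec g ! (a - 1) = sort_dec g ! a"
    using sorting_perm_nth[OF w a(1)] sorting_perm_nth[OF w a(2)] a(3,4) tie by simp
  then have vanish: "thetaop a (xmon (sort_dec g)) = 0"
    using sact_xmon_tie[of a "sort_dec g"] a by (simp add: theta_invariant)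
  have "thetaop i (atom g) = theta_word (i # ws) (xmon (sort_dec g))"
    using atom_eq_theta_word[OF ws] by (simp add: theta_word_Cons)
  also have "\<dots> = theta_word (ws @ [a]) (xmon (sort_dec g))"
    using theta_word_reduced_eq[OF r1 r2 same_perm] by simp
  also have "\<dots> = 0"
    using vanish by (simp add: theta_word_snoc theta_word_zero)
  finally show ?thesis .
qed

lemma sort_dec_snoc_0: "sort_dec (g @ [0]) = sort_dec g @ [0]"
proof -
  have "sort (g @ [0]) = 0 # sort g"
    by (rule properties_for_sort) simp_all
  then show ?thesis
    by (simp add: sort_dec_def)
qed

lemma xmon_snoc_0: "xmon (l @ [0]) = xmon l"
  unfolding xmon_def by (auto simp: prod.lessThan_Suc nth_append intro!: prod.cong)

lemma min_perm_snoc_0: "min_perm (g @ [0]) = min_perm g"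
proof (rule min_perm_eqI)
  let ?w = "min_perm g" and ?n = "length g"
  have w: "sorting_perm g ?w" and ties: "ties_ordered g ?w"
    by (rule min_perm_sorting_perm ties_ordered_min_perm)+
  have perm: "?w permutes {1..Suc ?n}"
    by (rule permutes_subset[OF sorting_perm_permutes[OF w]]) auto
  have last: "?w (Suc ?n) = Suc ?n"
    using permutes_not_in[OF sorting_perm_permutes[OF w]] by simp
  show "sorting_perm (g @ [0]) ?w"
    unfolding sorting_perm_def
  proof (intro conjI ballI)
    show "?w permutes {1..length (g @ [0])}"
      using perm by simp
    fix q
    assume "q \<in> {1..length (g @ [0])}"
    then consider "q \<in> {1..?n}" | "q = Suc ?n"
      by fastforce
    then show "sort_dec (g @ [0]) ! (q - 1) = (g @ [0]) ! (?w q - 1)"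
    proof cases
      case 1
      then show ?thesis
        using sorting_perm_in[OF w 1] sorting_perm_nth[OF w 1] by (auto simp: sort_dec_snoc_0 nth_append)
    qed (simp add: last sort_dec_snoc_0 nth_append)
  qed
  show "ties_ordered (g @ [0]) ?w"
    unfolding ties_ordered_def
  proof (intro allI impI)
    fix q q'
    assume q: "1 \<le> q" "q < q'" "q' \<le> length (g @ [0])"
      and tie: "sort_dec (g @ [0]) ! (q - 1) = sort_dec (g @ [0]) ! (q' - 1)"
    show "?w q < ?w q'"
    proof (cases "q' \<le> ?n")
      case True
      then have "q - 1 < ?n" "q' - 1 < ?n"
        using q by auto
      then show ?thesis
        using ties_orderedD[OF ties q(1,2) True] tie by (simp add: sort_dec_snoc_0 nth_append)
    next
      case False
      then have "q' = Suc ?n"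
        using q by simp
      then show ?thesis
        using q sorting_perm_in[OF w, of q] last by simp
    qed
  qed
qed

lemma atom_snoc_0: "atom (g @ [0]) = atom g"
  by (simp add: atom_def min_perm_snoc_0 sort_dec_snoc_0 xmon_snoc_0)

lemma atom_append_zeros: "atom (g @ replicate k 0) = atom g"
proof (induction k)
  case (Suc k)
  have "atom (g @ replicate (Suc k) 0) = atom ((g @ replicate k 0) @ [0])"
    by (simp add: replicate_append_same)
  also have "\<dots> = atom g"
    using Suc by (simp only: atom_snoc_0)
  finally show ?case .
qed simp

section \<open>Atom positivity\<close>

lemma atom_positive_zero: "atom_positive 0"
  unfolding atom_positive_def by (rule exI[of _ "{}"]) simp

lemma atom_positive_atom: "atom_positive (atom g)"
  unfolding atom_positive_def by (rule exI[of _ "{g}"], rule exI[of _ "\<lambda>_. 1"]) simp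

lemma sum_if_mem_subset:
  assumes "finite C" "A \<subseteq> C"
  shows "(\<Sum>x\<in>C. if x \<in> A then g x else 0) = sum g A"
  using sum.inter_restrict[OF assms(1), of g A] Int_absorb1[OF assms(2)] by simp

lemma atom_positive_add:
  assumes "atom_positive f" "atom_positive h"
  shows "atom_positive (f + h)"
proof -
  obtain S c where S: "finite S" "f = (\<Sum>x\<in>S. of_nat (c x) * atom x)"
    using assms(1) atom_positive_def by blast
  obtain T d where T: "finite T" "h = (\<Sum>x\<in>T. of_nat (d x) * atom x)"
    using assms(2) atom_positive_def by blast
  define e where "e x = (if x \<in> S then c x else 0) + (if x \<in> T then d x else 0)" for x
  have fin: "finite (S \<union> T)"
    using S T by simp
  have "of_nat (e x) * atom x
      = (if x \<in> S then of_nat (c x) * atom x else 0) + (if x \<in> T then of_nat (d x) * atom x else 0)" for x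
    by (simp add: e_def distrib_right)
  then have "(\<Sum>x\<in>S \<union> T. of_nat (e x) * atom x)
      = (\<Sum>x\<in>S \<union> T. if x \<in> S then of_nat (c x) * atom x else 0)
        + (\<Sum>x\<in>S \<union> T. if x \<in> T then of_nat (d x) * atom x else 0)"
    by (simp only: sum.distrib)
  also have "\<dots> = f + h"
    unfolding S(2) T(2) sum_if_mem_subset[OF fin Un_upper1] sum_if_mem_subset[OF fin Un_upper2] ..
  finally show ?thesis
    unfolding atom_positive_def using fin by (intro exI[of _ "S \<union> T"] exI[of _ e]) simp
qed

lemma atom_positive_of_nat_mult:
  assumes "atom_positive f"
  shows "atom_positive (of_nat k * f)"
proof -
  obtain S c where S: "finite S" "f = (\<Sum>x\<in>S. of_nat (c x) * atom x)"
    using assms atom_positive_def by blast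
  have "of_nat k * f = (\<Sum>x\<in>S. of_nat k * (of_nat (c x) * atom x))"
    unfolding S(2) by (rule sum_distrib_left)
  also have "\<dots> = (\<Sum>x\<in>S. of_nat (k * c x) * atom x)"
    by (simp only: of_nat_mult mult.assoc)
  finally show ?thesis
    unfolding atom_positive_def using S(1) by (intro exI[of _ S] exI[of _ "\<lambda>x. k * c x"]) simp
qed

lemma atom_positive_sum:
  "finite S \<Longrightarrow> (\<And>x. x \<in> S \<Longrightarrow> atom_positive (F x)) \<Longrightarrow> atom_positive (\<Sum>x\<in>S. F x)"
proof (induction S rule: finite_induct)
  case (insert x S)
  then show ?case
    by (simp add: atom_positive_add)
qed (simp add: atom_positive_zero)

text \<open>Padding \<open>\<gamma>\<close> by zeros does not change the atom and makes the entries \<open>\<gamma>\<^sub>i, \<gamma>\<^sub>i\<^sub>+\<^sub>1\<close> exist.\<close>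

lemma atom_positive_piop_atom:
  assumes i: "1 \<le> i"
  shows "atom_positive (piop i (atom g))"
proof -
  define h where "h = g @ replicate (Suc i) 0"
  have atom_h: "atom h = atom g"
    unfolding h_def by (rule atom_append_zeros)
  have len: "Suc i \<le> length h"
    unfolding h_def by simp
  consider (gt) "h ! i < h ! (i - 1)" | (eq) "h ! (i - 1) = h ! i" | (lt) "h ! (i - 1) < h ! i"
    by linarith
  then have "atom_positive (piop i (atom h))"
  proof cases
    case gt
    then have "piop i (atom h) = atom h + atom (comp_act (sidx i) h)"
      by (simp add: piop_eq_theta theta_atom_ascent[OF i len])
    then show ?thesis
      by (simp add: atom_positive_add atom_positive_atom)
  next
    case eq
    then show ?thesis
      by (simp add: piop_eq_theta theta_atom_tie[OF i len] atom_positive_atom)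
  next
    case lt
    let ?h' = "comp_act (sidx i) h"
    have "?h' ! i < ?h' ! (i - 1)"
      using lt i len by (simp add: nth_comp_act_sidx)
    then have "atom h = thetaop i (atom ?h')"
      using theta_atom_ascent[of i ?h'] comp_act_sidx_sidx[OF i len] i len by simp
    then have "piop i (atom h) = 0"
      by (simp add: piop_eq_theta theta_theta)
    then show ?thesis
      by (simp add: atom_positive_zero)
  qed
  then show ?thesis
    by (simp add: atom_h)
qed

theorem lemma4p16:
  fixes f :: zpoly and i :: nat
  assumes "atom_positive f" and "1 \<le> i"
  shows "atom_positive (piop i f)"
proof -
  obtain S c where S: "finite S" "f = (\<Sum>x\<in>S. of_nat (c x) * atom x)"
    using assms(1) atom_positive_def by blast
  then have "piop i f = (\<Sum>x\<in>S. of_nat (c x) * piop i (atom x))"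
    by (simp add: piop_sum piop_of_nat_mult)
  then show ?thesis
    using atom_positive_sum[OF S(1)] atom_positive_of_nat_mult atom_positive_piop_atom[OF assms(2)]
    by simp
qed
end
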